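(* Let $H\in(1/2,1)$, $c\in(0,2^{2H-2})$, $\lambda\in(0,c)$ and $n\in\mathbb{N}$. Then there exists a (unique in law) random vector $(X^{(n)}_1,\dots,X^{(n)}_n)\in\{0,1\}^n$ such that for all disjoint $A,B\subseteq\{1,\dots,n\}$, \[ P\Big(\bigcap_{i\in A}\{X^{(n)}_i=1\}\cap\bigcap_{i\in B}\{X^{(n)}_i=0\}\Big)=p_n\,c^{|A|-1}D^\circ_H(A,B) \] (a generalized Bernoulli process II, GBP-II). This process is stationary (for any $I\subseteq\{1,\dots,n\}$ and $m$ with $I+m\subseteq\{1,\dots,n\}$, $(X^{(n)}_{i+m})_{i\in I}$ has the same law as $(X^{(n)}_i)_{i\in I}$), $P(X^{(n)}_i=1)=p_n$, $P(X^{(n)}_i=0)=1-p_n$, and for $i\neq j$ in $\{1,\dots,n\}$, \[ \mathrm{Cov}(X^{(n)}_i,X^{(n)}_j)=p_n c|i-j|^{2H-2}-p_n^2 . \] For fixed $i\neq j$ in $\mathbb{N}$, $\lim_{n\to\infty}\mathrm{Corr}(X^{(n)}_i,X^{(n)}_j)=c|i-j|^{2H-2}$. Moreover, with $B^\circ_n=\sum_{i=1}^n X^{(n)}_i$, we have $E(B^\circ_n)=\lambda n^{2H-1}$ and, as $n\to\infty$, \[ E\big((B^\circ_n)^2\big)\sim \frac{\lambda c}{(2H-1)H}\,n^{4H-2},\qquad \mathrm{Var}(B^\circ_n)\sim n^{4H-2}\Big(\frac{\lambda c}{(2H-1)H}-\lambda^2\Big). \]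
   Context: For $n\in\mathbb{N}$ put $p_n=\lambda n^{2H-2}$. For a finite set $A=\{i_0<i_1<\dots<i_k\}\subset\mathbb{N}\cup\{0\}$ define $L^\circ_H(A)=\prod_{j=1}^{k}|i_j-i_{j-1}|^{2H-2}$; if $|A|=1$ set $L^\circ_H(A)=1$, and set $L^\circ_H(\emptyset)=c/p_n$. For disjoint finite sets $A,B\subset\mathbb{N}\cup\{0\}$ define $D^\circ_H(A,B)=\sum_{B'\subseteq B}(-1)^{|B'|}c^{|B'|}L^\circ_H(A\cup B')$ (in particular $D^\circ_H(A,\emptyset)=L^\circ_H(A)$). Notation $a_n\sim b_n$ means $a_n/b_n\to1$. *)

theory Defs
  imports "HOL-Probability.Probability" "HOL-Library.Landau_Symbols"
begin

definition pn :: "real \<Rightarrow> real \<Rightarrow> nat \<Rightarrow> real" where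
  "pn H lam n = lam * real n powr (2*H - 2)"

definition Lcirc :: "real \<Rightarrow> real \<Rightarrow> real \<Rightarrow> nat \<Rightarrow> nat set \<Rightarrow> real" where
  "Lcirc H c lam n A =
     (if A = {} then c / pn H lam n
      else (let xs = sorted_list_of_set A in
            \<Prod>j<length xs - 1. real (xs ! (Suc j) - xs ! j) powr (2*H - 2)))"

definition Dcirc :: "real \<Rightarrow> real \<Rightarrow> real \<Rightarrow> nat \<Rightarrow> nat set \<Rightarrow> nat set \<Rightarrow> real" where
  "Dcirc H c lam n A B =
     (\<Sum>B'\<in>Pow B. (-1) ^ card B' * c ^ card B' * Lcirc H c lam n (A \<union> B'))"

text \<open>A random vector (X_1,...,X_n) in {0,1}^n is represented by its law: a pmf on
  subsets S of {1..n}, where S = {i. X_i = 1}.\<close>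
definition GBP2 :: "real \<Rightarrow> real \<Rightarrow> real \<Rightarrow> nat \<Rightarrow> nat set pmf \<Rightarrow> bool" where
  "GBP2 H c lam n P \<longleftrightarrow>
     set_pmf P \<subseteq> Pow {1..n} \<and>
     (\<forall>A B. A \<subseteq> {1..n} \<longrightarrow> B \<subseteq> {1..n} \<longrightarrow> A \<inter> B = {} \<longrightarrow>
        measure_pmf.prob P {S. A \<subseteq> S \<and> B \<inter> S = {}}
          = pn H lam n * c powi (int (card A) - 1) * Dcirc H c lam n A B)"

definition Xc :: "nat \<Rightarrow> nat set \<Rightarrow> real" where
  "Xc i S = (if i \<in> S then 1 else 0)"

definition cov_pmf :: "'a pmf \<Rightarrow> ('a \<Rightarrow> real) \<Rightarrow> ('a \<Rightarrow> real) \<Rightarrow> real" where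
  "cov_pmf P X Y = measure_pmf.expectation P (\<lambda>s. (X s - measure_pmf.expectation P X) *
                                               (Y s - measure_pmf.expectation P Y))"

definition corr_pmf :: "'a pmf \<Rightarrow> ('a \<Rightarrow> real) \<Rightarrow> ('a \<Rightarrow> real) \<Rightarrow> real" where
  "corr_pmf P X Y = cov_pmf P X Y / sqrt (measure_pmf.variance P X * measure_pmf.variance P Y)"

end

theory Submission
  imports Defs
begin

text \<open>
  Put u 0 = 1 and u d = c d^(2H-2) for d \<ge> 1. For nonempty U the prescribed probability of
  {U \<subseteq> S} is p_n times the product of u over the gaps of U, and the prescribed probabilities
  of {A \<subseteq> S, B \<inter> S = {}} are the inclusion-exclusion sums of these. They come from a law on
  the subsets of {1..n}, necessarily unique, as soon as all atoms P(S = A) are nonnegative.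
  Gap products split multiplicatively at every point of A, so a nonempty atom factors into
  first-renewal probabilities f of the renewal sequence u, one per gap of A, and two
  no-renewal probabilities 1 - \<Sum> f for the stretches before Min A and after Max A. The empty
  atom is 1 - p_n times a sum of n no-renewal probabilities, which is nonnegative because
  p_n \<le> u (n-1) and the no-renewal probabilities convolved with u sum to 1.
  The hypothesis c < 2^(2H-2) makes u log-convex, hence f \<ge> 0 by Kaluza's theorem.
  Stationarity holds because the prescription only sees gaps, and the moments follow from the
  one- and two-point probabilities together with \<Sum>_{i\<noteq>j} |i-j|^(2H-2) ~ n^(2H) / (H (2H-1)).
\<close>

section \<open>Laws of random subsets via inclusion-exclusion\<close>

lemma sum_Pow_insert:
  assumes "finite F" "x \<notin> F"
  shows "(\<Sum>T\<in>Pow (insert x F). h T) = (\<Sum>T\<in>Pow F. h T) + (\<Sum>T\<in>Pow F. h (insert x T))"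
proof -
  have "(\<Sum>T\<in>Pow (insert x F). h T) = (\<Sum>T\<in>Pow F. h T) + (\<Sum>T\<in>insert x ` Pow F. h T)"
    unfolding Pow_insert using assms by (intro sum.union_disjoint) auto
  also have "(\<Sum>T\<in>insert x ` Pow F. h T) = (\<Sum>T\<in>Pow F. h (insert x T))"
    using assms by (subst sum.reindex) (auto intro!: inj_onI)
  finally show ?thesis .
qed

lemma sum_Pow_Un:
  assumes "finite F1" "finite F2" "F1 \<inter> F2 = {}"
  shows "(\<Sum>T\<in>Pow (F1 \<union> F2). h T) = (\<Sum>T1\<in>Pow F1. \<Sum>T2\<in>Pow F2. h (T1 \<union> T2))"
  using assms(2,3)
proof (induction F2 arbitrary: h rule: finite_induct)
  case (insert x F)
  have "(\<Sum>T\<in>Pow (F1 \<union> insert x F). h T) = (\<Sum>T\<in>Pow (insert x (F1 \<union> F)). h T)" by simp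
  also have "\<dots> = (\<Sum>T\<in>Pow (F1 \<union> F). h T) + (\<Sum>T\<in>Pow (F1 \<union> F). h (insert x T))"
    using insert assms by (intro sum_Pow_insert) auto
  also have "\<dots> = (\<Sum>T1\<in>Pow F1. \<Sum>T2\<in>Pow (insert x F). h (T1 \<union> T2))"
    using insert.IH[of h] insert.IH[of "\<lambda>T. h (insert x T)"] insert by (simp add: sum_Pow_insert sum.distrib)
  finally show ?case .
qed simp

definition incl_excl :: "('a set \<Rightarrow> real) \<Rightarrow> 'a set \<Rightarrow> 'a set \<Rightarrow> real" where
  "incl_excl F A B = (\<Sum>B'\<in>Pow B. (-1) ^ card B' * F (A \<union> B'))"

lemma incl_excl_empty [simp]: "incl_excl F A {} = F A"
  by (simp add: incl_excl_def)

lemma incl_excl_insert: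
  assumes "finite B" "x \<notin> B" "x \<notin> A"
  shows "incl_excl F A (insert x B) = incl_excl F A B - incl_excl F (insert x A) B"
proof -
  have "incl_excl F A (insert x B) =
      incl_excl F A B + (\<Sum>B'\<in>Pow B. (-1) ^ card (insert x B') * F (A \<union> insert x B'))"
    unfolding incl_excl_def using assms by (subst sum_Pow_insert) auto
  also have "(\<Sum>B'\<in>Pow B. (-1) ^ card (insert x B') * F (A \<union> insert x B')) = - incl_excl F (insert x A) B"
    unfolding incl_excl_def sum_negf[symmetric]
  proof (intro sum.cong refl)
    fix B' assume "B' \<in> Pow B"
    then have "finite B'" "x \<notin> B'" using assms finite_subset by auto
    then show "(-1) ^ card (insert x B') * F (A \<union> insert x B') = - ((-1) ^ card B' * F (insert x A \<union> B'))"
      by simp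
  qed
  finally show ?thesis by simp
qed

lemma incl_excl_singleton: "b \<notin> A \<Longrightarrow> incl_excl F A {b} = F A - F (insert b A)"
  using incl_excl_insert[of "{}" b A F] by simp

lemma sum_incl_excl_atoms:
  assumes "finite N" "A \<subseteq> N" "B \<subseteq> N" "A \<inter> B = {}"
  shows "(\<Sum>S | S \<subseteq> N \<and> A \<subseteq> S \<and> B \<inter> S = {}. incl_excl F S (N - S)) = incl_excl F A B"
  using assms(2-4)
proof (induction "card (N - A - B)" arbitrary: A B)
  case 0
  then have "N - A = B" using assms(1) by auto
  moreover have "{S. S \<subseteq> N \<and> A \<subseteq> S \<and> B \<inter> S = {}} = {A}" using 0 \<open>N - A = B\<close> by auto
  ultimately show ?case by simp
next
  case (Suc k)
  then obtain x where x: "x \<in> N - A - B"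
    by (metis card.empty ex_in_conv nat.distinct(1))
  have split: "{S. S \<subseteq> N \<and> A \<subseteq> S \<and> B \<inter> S = {}} =
      {S. S \<subseteq> N \<and> insert x A \<subseteq> S \<and> B \<inter> S = {}} \<union> {S. S \<subseteq> N \<and> A \<subseteq> S \<and> insert x B \<inter> S = {}}"
    by auto
  have "N - insert x A - B = (N - A - B) - {x}" "N - A - insert x B = (N - A - B) - {x}" by auto
  then have "k = card (N - insert x A - B)" "k = card (N - A - insert x B)"
    using Suc.hyps(2) x assms(1) by (simp_all add: card_Diff_singleton)
  then have "(\<Sum>S | S \<subseteq> N \<and> A \<subseteq> S \<and> B \<inter> S = {}. incl_excl F S (N - S)) =
      incl_excl F (insert x A) B + incl_excl F A (insert x B)"
    unfolding split using Suc.hyps(1)[of "insert x A" B] Suc.hyps(1)[of A "insert x B"] Suc.prems x assms(1)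
    by (subst sum.union_disjoint) (simp_all, blast+)
  also have "\<dots> = incl_excl F A B"
    using incl_excl_insert[of B x A F] x Suc.prems assms(1) finite_subset[of B N] by auto
  finally show ?case .
qed

lemma prob_eq_restrict_set_pmf:
  assumes "set_pmf p \<subseteq> Z"
  shows "measure_pmf.prob p X = measure_pmf.prob p (X \<inter> Z)"
  using assms by (metis inf.absorb_iff2 inf_assoc inf_commute measure_Int_set_pmf)

lemma pmf_eq_atom_prob:
  assumes "set_pmf p \<subseteq> Pow N" "S \<subseteq> N"
  shows "pmf p S = measure_pmf.prob p {T. S \<subseteq> T \<and> (N - S) \<inter> T = {}}"
proof -
  have "{T. S \<subseteq> T \<and> (N - S) \<inter> T = {}} \<inter> Pow N = {S}" using assms(2) by auto
  then show ?thesis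
    using prob_eq_restrict_set_pmf[OF assms(1), of "{T. S \<subseteq> T \<and> (N - S) \<inter> T = {}}"]
    by (simp add: measure_pmf_single)
qed

lemma ex_pmf_incl_excl:
  assumes "finite N" "F {} = 1" "\<And>S. S \<subseteq> N \<Longrightarrow> 0 \<le> incl_excl F S (N - S)"
  obtains p where "set_pmf p \<subseteq> Pow N"
    "\<And>A B. A \<subseteq> N \<Longrightarrow> B \<subseteq> N \<Longrightarrow> A \<inter> B = {} \<Longrightarrow>
       measure_pmf.prob p {S. A \<subseteq> S \<and> B \<inter> S = {}} = incl_excl F A B"
proof -
  define f where "f S = (if S \<subseteq> N then incl_excl F S (N - S) else 0)" for S
  have f_nonneg: "0 \<le> f S" for S using assms(3) by (simp add: f_def)
  have "(\<Sum>S\<in>Pow N. f S) = (\<Sum>S | S \<subseteq> N \<and> {} \<subseteq> S \<and> {} \<inter> S = {}. incl_excl F S (N - S))"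
    by (intro sum.cong) (auto simp: f_def)
  also have "\<dots> = incl_excl F {} {}"
    using assms(1) by (intro sum_incl_excl_atoms) auto
  also have "\<dots> = 1" using assms(2) by simp
  finally have "(\<Sum>S\<in>Pow N. f S) = 1" .
  moreover have "(\<integral>\<^sup>+S. ennreal (f S) \<partial>count_space UNIV) = (\<Sum>S\<in>Pow N. ennreal (f S))"
    using assms(1) by (intro nn_integral_count_space') (auto simp: f_def)
  moreover have "(\<Sum>S\<in>Pow N. ennreal (f S)) = ennreal (\<Sum>S\<in>Pow N. f S)"
    using f_nonneg by (simp add: sum_ennreal)
  ultimately have "(\<integral>\<^sup>+S. ennreal (f S) \<partial>count_space UNIV) = 1" by simp
  then have pmf_p: "pmf (embed_pmf f) S = f S" for S
    using f_nonneg by (simp add: pmf_embed_pmf)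
  have supp: "set_pmf (embed_pmf f) \<subseteq> Pow N" by (auto simp: set_pmf_eq pmf_p f_def)
  show ?thesis
  proof (rule that[OF supp])
    fix A B assume AB: "A \<subseteq> N" "B \<subseteq> N" "A \<inter> B = {}"
    let ?E = "{S. S \<subseteq> N \<and> A \<subseteq> S \<and> B \<inter> S = {}}"
    have "measure_pmf.prob (embed_pmf f) {S. A \<subseteq> S \<and> B \<inter> S = {}} = measure_pmf.prob (embed_pmf f) ?E"
      using prob_eq_restrict_set_pmf[OF supp, of "{S. A \<subseteq> S \<and> B \<inter> S = {}}"]
      by (simp add: Int_def conj_commute)
    also have "\<dots> = (\<Sum>S\<in>?E. f S)"
      using assms(1) by (subst measure_measure_pmf_finite) (auto simp: pmf_p)
    also have "\<dots> = incl_excl F A B"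
      using sum_incl_excl_atoms[OF assms(1) AB] by (simp add: f_def)
    finally show "measure_pmf.prob (embed_pmf f) {S. A \<subseteq> S \<and> B \<inter> S = {}} = incl_excl F A B" .
  qed
qed

lemma pmf_map_pmf_restrict:
  "pmf (map_pmf (\<lambda>S. {i\<in>I. g i \<in> S}) p) R =
    (if R \<subseteq> I then measure_pmf.prob p {S. g ` R \<subseteq> S \<and> g ` (I - R) \<inter> S = {}} else 0)"
proof -
  have "R \<subseteq> I \<Longrightarrow> {i\<in>I. g i \<in> S} = R \<longleftrightarrow> g ` R \<subseteq> S \<and> g ` (I - R) \<inter> S = {}" for S
    by (auto simp: set_eq_iff image_subset_iff)
  moreover have "\<not> R \<subseteq> I \<Longrightarrow> {i\<in>I. g i \<in> S} \<noteq> R" for S by blast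
  ultimately show ?thesis by (auto simp: pmf_map vimage_def)
qed

lemma incl_excl_image:
  assumes "inj_on g I" "A \<subseteq> I" "B \<subseteq> I" "\<And>U. U \<subseteq> I \<Longrightarrow> F (g ` U) = F U"
  shows "incl_excl F (g ` A) (g ` B) = incl_excl F A B"
proof -
  have inj: "inj_on ((`) g) (Pow B)"
    using assms(1,3) by (intro inj_on_image_Pow) (auto intro: inj_on_subset)
  have "incl_excl F (g ` A) (g ` B) = (\<Sum>B'\<in>Pow B. (-1) ^ card (g ` B') * F (g ` A \<union> g ` B'))"
  proof -
    have "Pow (g ` B) = (`) g ` Pow B" by (rule image_Pow_surj[symmetric]) (rule refl)
    then show ?thesis unfolding incl_excl_def by (simp add: sum.reindex[OF inj])
  qed
  also have "\<dots> = incl_excl F A B"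
    unfolding incl_excl_def
  proof (intro sum.cong refl)
    fix B' assume "B' \<in> Pow B"
    then have "card (g ` B') = card B'" "g ` A \<union> g ` B' = g ` (A \<union> B')" "A \<union> B' \<subseteq> I"
      using assms(1-3) by (auto intro!: card_image inj_on_subset[OF assms(1)])
    then show "(-1) ^ card (g ` B') * F (g ` A \<union> g ` B') = (-1) ^ card B' * F (A \<union> B')"
      using assms(4) by simp
  qed
  finally show ?thesis .
qed

section \<open>Gap products of sorted lists\<close>

fun gap_prod :: "(nat \<Rightarrow> real) \<Rightarrow> nat list \<Rightarrow> real" where
  "gap_prod h (x # y # zs) = h (y - x) * gap_prod h (y # zs)"
| "gap_prod h _ = 1"

lemma prod_eq_gap_prod: "(\<Prod>j<length xs - 1. h (xs ! Suc j - xs ! j)) = gap_prod h xs"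
proof (induction h xs rule: gap_prod.induct)
  case (1 h x y zs)
  have "(\<Prod>j<length (x # y # zs) - 1. h ((x # y # zs) ! Suc j - (x # y # zs) ! j))
      = h (y - x) * (\<Prod>j<length zs. h ((y # zs) ! Suc j - (y # zs) ! j))"
    by (simp add: prod.lessThan_Suc_shift del: prod.lessThan_Suc)
  then show ?case using 1 by simp
qed auto

lemma gap_prod_append: "xs \<noteq> [] \<Longrightarrow> gap_prod h (xs @ ys) = gap_prod h xs * gap_prod h (last xs # ys)"
  by (induction h xs rule: gap_prod.induct) auto

lemma gap_prod_map:
  "sorted_wrt (<) xs \<Longrightarrow> (\<forall>x\<in>set xs. \<forall>y\<in>set xs. x < y \<longrightarrow> s y - s x = y - x) \<Longrightarrow>
   gap_prod h (map s xs) = gap_prod h xs"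
  by (induction h xs rule: gap_prod.induct) auto

lemma gap_prod_scale:
  "sorted_wrt (<) xs \<Longrightarrow> (\<And>d. 0 < d \<Longrightarrow> g d = a * h d) \<Longrightarrow>
   gap_prod g xs = a ^ (length xs - 1) * gap_prod h xs"
proof (induction h xs rule: gap_prod.induct)
  case (1 h x y zs)
  then show ?case by (simp add: algebra_simps)
qed auto

lemma sorted_list_of_set_Un:
  assumes "finite U" "finite V" "\<forall>x\<in>U. \<forall>y\<in>V. x < y"
  shows "sorted_list_of_set (U \<union> V) = sorted_list_of_set U @ sorted_list_of_set (V :: nat set)"
proof -
  have "U \<inter> V = {}" using assms(3) by fastforce
  then have "sorted_wrt (<) (sorted_list_of_set U @ sorted_list_of_set V) \<and>
      set (sorted_list_of_set U @ sorted_list_of_set V) = U \<union> V \<and>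
      length (sorted_list_of_set U @ sorted_list_of_set V) = card (U \<union> V)"
    using assms by (auto simp: sorted_wrt_append card_Un_disjoint)
  then show ?thesis using assms by (metis finite_UnI sorted_list_of_set_unique)
qed

lemma sorted_list_of_set_image:
  assumes "finite U" "\<forall>x\<in>U. \<forall>y\<in>U. x < y \<longrightarrow> s x < (s y :: nat)"
  shows "sorted_list_of_set (s ` U) = map s (sorted_list_of_set (U :: nat set))"
proof -
  have "inj_on s U" using assms(2) by (metis inj_onI linorder_neq_iff order_less_irrefl)
  moreover have "sorted_wrt (\<lambda>x y. s x < s y) (sorted_list_of_set U)"
    using sorted_wrt_mono_rel[of "sorted_list_of_set U" "(<)"] assms by simp
  ultimately have "sorted_wrt (<) (map s (sorted_list_of_set U)) \<and> set (map s (sorted_list_of_set U)) = s ` U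
      \<and> length (map s (sorted_list_of_set U)) = card (s ` U)"
    using assms by (simp add: sorted_wrt_map card_image)
  then show ?thesis using assms by (metis finite_imageI sorted_list_of_set_unique)
qed

lemma last_sorted_list_of_set:
  assumes "finite U" "U \<noteq> {}"
  shows "last (sorted_list_of_set U) = Max (U :: nat set)"
proof (rule Max_eqI[symmetric])
  let ?xs = "sorted_list_of_set U"
  have ne: "?xs \<noteq> []" using assms by simp
  show "last ?xs \<in> U" using assms ne last_in_set by (metis set_sorted_list_of_set)
  fix x assume "x \<in> U"
  then obtain i where i: "i < length ?xs" "?xs ! i = x"
    using assms by (metis in_set_conv_nth set_sorted_list_of_set)
  have "?xs ! i \<le> ?xs ! (length ?xs - 1)" using i by (intro sorted_nth_mono) auto
  then show "x \<le> last ?xs" using i ne by (simp add: last_conv_nth)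
qed (use assms in auto)

section \<open>Log-convex renewal sequences\<close>

locale kaluza_sequence =
  fixes u :: "nat \<Rightarrow> real"
  assumes u_0: "u 0 = 1"
    and u_pos: "0 < u d"
    and u_antimono: "d \<le> d' \<Longrightarrow> u d' \<le> u d"
    and u_log_convex: "m \<le> m' \<Longrightarrow> u (Suc m) * u m' \<le> u (Suc m') * u m"
begin

fun first_renewal :: "nat \<Rightarrow> real" where
  "first_renewal 0 = 0"
| "first_renewal (Suc k) = u (Suc k) - (\<Sum>j<k. first_renewal (Suc j) * u (k - j))"

declare first_renewal.simps(2) [simp del] \<comment> \<open>it would unfold itself inside the sum\<close>

lemma renewal_equation: "(\<Sum>j<Suc k. first_renewal (Suc j) * u (k - j)) = u (Suc k)"
  using first_renewal.simps(2)[of k] by (simp add: u_0)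

lemma first_renewal_nonneg: "0 \<le> first_renewal d"
proof (induction d rule: less_induct)
  case (less d)
  show ?case
  proof (cases "d \<le> 1")
    case True
    then show ?thesis using u_pos[of 1] first_renewal.simps(2)[of 0] by (cases d) auto
  next
    case False
    then obtain n where n: "d = Suc n" "1 \<le> n" by (cases d) auto
    then obtain k where k: "n = Suc k" by (cases n) auto
    have step: "u n * first_renewal (Suc n) = u (Suc n) * u n - u n * (\<Sum>j<n. first_renewal (Suc j) * u (n - j))"
      using first_renewal.simps(2)[of n] by (simp add: right_diff_distrib mult.commute)
    have un: "u n = (\<Sum>j<n. first_renewal (Suc j) * u (k - j))"
      using renewal_equation[of k] k by simp
    have "u (Suc n) * u n = (\<Sum>j<n. first_renewal (Suc j) * (u (Suc n) * u (k - j)))"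
      by (subst un) (simp add: sum_distrib_left mult_ac)
    moreover have "u n * (\<Sum>j<n. first_renewal (Suc j) * u (n - j)) =
        (\<Sum>j<n. first_renewal (Suc j) * (u n * u (n - j)))"
      by (simp add: sum_distrib_left mult_ac)
    ultimately have "u n * first_renewal (Suc n) =
        (\<Sum>j<n. first_renewal (Suc j) * (u (Suc n) * u (k - j) - u n * u (n - j)))"
      using step by (simp add: sum_subtractf right_diff_distrib)
    also have "\<dots> \<ge> 0"
    proof (intro sum_nonneg mult_nonneg_nonneg)
      fix j assume j: "j \<in> {..<n}"
      then show "0 \<le> first_renewal (Suc j)" using less n by simp
      have "Suc (k - j) = n - j" using j k by auto
      then show "0 \<le> u (Suc n) * u (k - j) - u n * u (n - j)"
        using u_log_convex[of "k - j" n] k by (simp add: mult.commute)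
    qed
    finally show ?thesis using u_pos[of n] n by (simp add: zero_le_mult_iff)
  qed
qed

definition renewal_tail :: "nat \<Rightarrow> real" where
  "renewal_tail k = 1 - (\<Sum>j<k. first_renewal (Suc j))"

lemma renewal_tail_Suc: "renewal_tail (Suc k) = renewal_tail k - first_renewal (Suc k)"
  by (simp add: renewal_tail_def)

lemma renewal_tail_nonneg: "0 \<le> renewal_tail k"
proof (cases k)
  case (Suc m)
  have "(\<Sum>j<k. first_renewal (Suc j) * u k) \<le> (\<Sum>j<k. first_renewal (Suc j) * u (m - j))"
    using first_renewal_nonneg Suc by (intro sum_mono mult_left_mono u_antimono) auto
  also have "\<dots> = u k" using renewal_equation[of m] Suc by simp
  finally have "u k * (1 - renewal_tail k) \<le> u k * 1"
    by (simp add: renewal_tail_def sum_distrib_left mult.commute)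
  then show ?thesis using u_pos[of k] by (simp add: mult_le_cancel_left_pos)
qed (simp add: renewal_tail_def)

definition chain_weight :: "nat set \<Rightarrow> real" where
  "chain_weight U = gap_prod u (sorted_list_of_set U)"

lemma chain_weight_singleton [simp]: "chain_weight {t} = 1"
  by (simp add: chain_weight_def)

lemma chain_weight_pair: "s < t \<Longrightarrow> chain_weight {s, t} = u (t - s)"
  using sorted_list_of_set_Un[of "{s}" "{t}"] by (simp add: chain_weight_def insert_commute)

lemma chain_weight_Un:
  assumes "finite U" "U \<noteq> {}" "finite V" "\<forall>x\<in>V. Max U < x"
  shows "chain_weight (U \<union> V) = chain_weight U * chain_weight (insert (Max U) V)"
proof -
  have "\<forall>x\<in>U. \<forall>y\<in>V. x < y" using assms by (meson Max_ge le_less_trans)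
  then have "sorted_list_of_set (U \<union> V) = sorted_list_of_set U @ sorted_list_of_set V"
    using assms by (simp add: sorted_list_of_set_Un)
  moreover have "sorted_list_of_set (insert (Max U) V) = Max U # sorted_list_of_set V"
    using sorted_list_of_set_Un[of "{Max U}" V] assms by simp
  ultimately show ?thesis
    using assms by (simp add: chain_weight_def gap_prod_append last_sorted_list_of_set)
qed

text \<open>A point of \<open>A\<close> that separates \<open>B\<close> from \<open>D\<close> splits every chain weight in the sum.\<close>
lemma incl_excl_chain_weight_split:
  assumes "finite A" "A \<noteq> {}" "finite B" "\<forall>x\<in>B. x < Max A"
    and "finite C" "finite D" "\<forall>x\<in>C \<union> D. Max A < x"
  shows "incl_excl chain_weight (A \<union> C) (B \<union> D) =
    incl_excl chain_weight A B * incl_excl chain_weight (insert (Max A) C) D"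
proof -
  have BD: "B \<inter> D = {}" using assms(4,7) by (meson UnI2 disjoint_iff order.asym)
  have "incl_excl chain_weight (A \<union> C) (B \<union> D) = (\<Sum>T1\<in>Pow B. \<Sum>T2\<in>Pow D.
      (-1) ^ card (T1 \<union> T2) * chain_weight (A \<union> C \<union> (T1 \<union> T2)))"
    unfolding incl_excl_def using assms BD by (intro sum_Pow_Un) auto
  also have "\<dots> = (\<Sum>T1\<in>Pow B. \<Sum>T2\<in>Pow D. ((-1) ^ card T1 * chain_weight (A \<union> T1)) *
      ((-1) ^ card T2 * chain_weight (insert (Max A) C \<union> T2)))"
  proof (intro sum.cong refl)
    fix T1 T2 assume T: "T1 \<in> Pow B" "T2 \<in> Pow D"
    then have fin: "finite T1" "finite T2" using assms(3,6) by (auto intro: finite_subset)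
    have "Max (A \<union> T1) = Max A"
      using T fin assms(1-4) by (intro Max_eqI) (auto intro: less_imp_le)
    moreover have "\<forall>x\<in>C \<union> T2. Max (A \<union> T1) < x"
      using \<open>Max (A \<union> T1) = Max A\<close> assms(7) T by auto
    ultimately have "chain_weight ((A \<union> T1) \<union> (C \<union> T2)) =
        chain_weight (A \<union> T1) * chain_weight (insert (Max A) (C \<union> T2))"
      using chain_weight_Un[of "A \<union> T1" "C \<union> T2"] fin assms(1,2,5) by simp
    moreover have "A \<union> C \<union> (T1 \<union> T2) = (A \<union> T1) \<union> (C \<union> T2)" by auto
    moreover have "card (T1 \<union> T2) = card T1 + card T2"
      using T fin BD by (intro card_Un_disjoint) auto
    ultimately show "(-1) ^ card (T1 \<union> T2) * chain_weight (A \<union> C \<union> (T1 \<union> T2)) =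
        ((-1) ^ card T1 * chain_weight (A \<union> T1)) * ((-1) ^ card T2 * chain_weight (insert (Max A) C \<union> T2))"
      by (simp add: power_add)
  qed
  also have "\<dots> = incl_excl chain_weight A B * incl_excl chain_weight (insert (Max A) C) D"
    unfolding incl_excl_def by (simp add: sum_product)
  finally show ?thesis .
qed

lemma incl_excl_chain_weight_expand:
  assumes "finite P" "\<forall>x\<in>P. x < lo" "lo + k \<le> n"
  shows "incl_excl chain_weight (insert n P) {lo..<lo + k} = chain_weight (insert n P) -
    (\<Sum>j<k. incl_excl chain_weight (insert (lo + j) P) {lo..<lo + j} * u (n - (lo + j)))"
  using assms(3)
proof (induction k)
  case (Suc k)
  let ?A = "insert (lo + k) P"
  have Max_A: "Max ?A = lo + k" using assms by (intro Max_eqI) auto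
  have "incl_excl chain_weight (?A \<union> {n}) ({lo..<lo + k} \<union> {}) =
      incl_excl chain_weight ?A {lo..<lo + k} * incl_excl chain_weight {lo + k, n} {}"
    using incl_excl_chain_weight_split[of ?A "{lo..<lo + k}" "{n}" "{}"] assms Suc.prems
    unfolding Max_A by auto
  moreover have "?A \<union> {n} = insert (lo + k) (insert n P)" by auto
  moreover have "chain_weight {lo + k, n} = u (n - (lo + k))"
    using Suc.prems by (intro chain_weight_pair) simp
  ultimately have "incl_excl chain_weight (insert (lo + k) (insert n P)) {lo..<lo + k} =
      incl_excl chain_weight ?A {lo..<lo + k} * u (n - (lo + k))"
    by simp
  moreover have "{lo..<lo + Suc k} = insert (lo + k) {lo..<lo + k}" by auto
  moreover have "lo + k \<notin> insert n P" using assms(2) Suc.prems by auto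
  ultimately show ?case
    using incl_excl_insert[of "{lo..<lo + k}" "lo + k" "insert n P" chain_weight] Suc
    by (simp add: diff_diff_eq)
qed simp

lemma first_renewal_eq_incl_excl:
  "1 \<le> d \<Longrightarrow> incl_excl chain_weight {s, s + d} {s<..<s + d} = first_renewal d"
proof (induction d rule: less_induct)
  case (less d)
  then obtain k where d: "d = Suc k" by (cases d) auto
  have "{s<..<s + d} = {Suc s..<Suc s + k}" using d by auto
  then have "incl_excl chain_weight {s, s + d} {s<..<s + d} = chain_weight {s, s + d} -
      (\<Sum>j<k. incl_excl chain_weight {s, Suc s + j} {Suc s..<Suc s + j} * u (s + d - (Suc s + j)))"
    using incl_excl_chain_weight_expand[of "{s}" "Suc s" k "s + d"] d by (simp add: insert_commute)
  also have "\<dots> = u d - (\<Sum>j<k. first_renewal (Suc j) * u (k - j))"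
  proof (intro arg_cong2[where f = "(-)"] sum.cong refl)
    fix j assume "j \<in> {..<k}"
    moreover have "{Suc s..<Suc s + j} = {s<..<s + Suc j}" by auto
    ultimately show "incl_excl chain_weight {s, Suc s + j} {Suc s..<Suc s + j} * u (s + d - (Suc s + j)) =
        first_renewal (Suc j) * u (k - j)"
      using less.IH[of "Suc j"] d by simp
  qed (simp add: chain_weight_pair d)
  finally show ?case using d first_renewal.simps(2)[of k] by simp
qed

lemma renewal_tail_eq_incl_excl: "incl_excl chain_weight {lo + k} {lo..<lo + k} = renewal_tail k"
proof (induction k arbitrary: lo)
  case (Suc k)
  have "{lo..<lo + Suc k} = insert lo {Suc lo..<Suc lo + k}" by auto
  moreover have "{Suc lo..<Suc lo + k} = {lo<..<lo + Suc k}" by auto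
  ultimately have "incl_excl chain_weight {lo + Suc k} {lo..<lo + Suc k} =
      incl_excl chain_weight {Suc lo + k} {Suc lo..<Suc lo + k} - incl_excl chain_weight {lo, lo + Suc k} {lo<..<lo + Suc k}"
    using incl_excl_insert[of "{Suc lo..<Suc lo + k}" lo "{lo + Suc k}" chain_weight] by (simp add: insert_commute)
  then show ?case using Suc.IH[of "Suc lo"] first_renewal_eq_incl_excl[of "Suc k" lo] by (simp add: renewal_tail_Suc)
qed (simp add: renewal_tail_def)

lemma renewal_tail_convolution: "(\<Sum>j<Suc k. renewal_tail j * u (k - j)) = 1"
proof -
  have "renewal_tail k = 1 - (\<Sum>j<k. renewal_tail j * u (k - j))"
    using incl_excl_chain_weight_expand[of "{}" 0 k k] renewal_tail_eq_incl_excl[of 0] by simp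
  then show ?thesis by (simp add: u_0)
qed

lemma renewal_tail_sum_le: "u k * (\<Sum>j<Suc k. renewal_tail j) \<le> 1"
proof -
  have "u k * (\<Sum>j<Suc k. renewal_tail j) = (\<Sum>j<Suc k. renewal_tail j * u k)"
    by (simp only: sum_distrib_left mult.commute)
  also have "\<dots> \<le> (\<Sum>j<Suc k. renewal_tail j * u (k - j))"
    using renewal_tail_nonneg by (intro sum_mono mult_left_mono u_antimono) auto
  finally show ?thesis using renewal_tail_convolution by simp
qed

lemma incl_excl_chain_weight_extend:
  assumes "S \<subseteq> {lo..m}" "m \<in> S"
  shows "incl_excl chain_weight S ({lo..m + k} - S) = incl_excl chain_weight S ({lo..m} - S) * renewal_tail k"
proof (induction k)
  case (Suc k)
  have fin: "finite S" using assms(1) finite_subset by blast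
  have Max_S: "Max S = m" using assms fin by (intro Max_eqI) auto
  have "S \<noteq> {}" "\<forall>x\<in>{lo..m} - S. x < m"
    using assms by (auto, metis Diff_iff atLeastAtMost_iff le_neq_implies_less)
  then have "incl_excl chain_weight (S \<union> {Suc (m + k)}) (({lo..m} - S) \<union> {m<..m + k}) =
      incl_excl chain_weight S ({lo..m} - S) * incl_excl chain_weight {m, Suc (m + k)} {m<..m + k}"
    using incl_excl_chain_weight_split[of S "{lo..m} - S" "{Suc (m + k)}" "{m<..m + k}"] assms fin
    unfolding Max_S by auto
  moreover have "({lo..m} - S) \<union> {m<..m + k} = {lo..m + k} - S" using assms by auto
  moreover have "{m<..m + k} = {m<..<m + Suc k}" by auto
  moreover have "{lo..m + Suc k} - S = insert (Suc (m + k)) ({lo..m + k} - S)" using assms by auto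
  ultimately show ?case
    using incl_excl_insert[of "{lo..m + k} - S" "Suc (m + k)" S chain_weight] Suc assms
      first_renewal_eq_incl_excl[of "Suc k" m]
    by (auto simp: renewal_tail_Suc algebra_simps)
qed (simp add: renewal_tail_def)

lemma incl_excl_chain_weight_nonneg_Max:
  assumes "S \<subseteq> {lo..m}" "m \<in> S"
  shows "0 \<le> incl_excl chain_weight S ({lo..m} - S)"
  using assms
proof (induction "card S" arbitrary: S m rule: less_induct)
  case less
  have fin: "finite S" using less.prems(1) finite_subset by blast
  show ?case
  proof (cases "S = {m}")
    case True
    moreover have "{lo..m} - {m} = {lo..<m}" by auto
    ultimately have "incl_excl chain_weight S ({lo..m} - S) = renewal_tail (m - lo)"
      using renewal_tail_eq_incl_excl[of lo "m - lo"] less.prems by auto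
    then show ?thesis using renewal_tail_nonneg by simp
  next
    case False
    define S' where "S' = S - {m}"
    define s where "s = Max S'"
    have S': "finite S'" "S' \<noteq> {}" using fin False less.prems S'_def by auto
    then have "s \<in> S'" by (simp add: s_def)
    then have s: "s \<in> S'" "s < m"
      using less.prems S'_def by (auto intro: le_neq_implies_less)
    have S'_sub: "S' \<subseteq> {lo..s}"
    proof
      fix x assume x: "x \<in> S'"
      then have "x \<le> s" using Max_ge[OF S'(1) x] s_def by simp
      moreover have "lo \<le> x" using x S'_def less.prems(1) by auto
      ultimately show "x \<in> {lo..s}" by simp
    qed
    have "incl_excl chain_weight (S' \<union> {m}) (({lo..s} - S') \<union> {s<..<m}) =
        incl_excl chain_weight S' ({lo..s} - S') * incl_excl chain_weight {s, m} {s<..<m}"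
    proof (rule incl_excl_chain_weight_split[of S' "{lo..s} - S'" "{m}" "{s<..<m}", folded s_def])
      show "\<forall>x\<in>{lo..s} - S'. x < s"
        using \<open>s \<in> S'\<close> by (metis Diff_iff atLeastAtMost_iff le_neq_implies_less)
    qed (use S' s in auto)
    moreover have "S' \<union> {m} = S" "({lo..s} - S') \<union> {s<..<m} = {lo..m} - S"
      using less.prems s S'_sub S'_def by auto
    moreover have "incl_excl chain_weight {s, m} {s<..<m} = first_renewal (m - s)"
      using first_renewal_eq_incl_excl[of "m - s" s] s by simp
    moreover have "card S' < card S" using fin less.prems S'_def by (metis card_Diff1_less)
    ultimately show ?thesis
      using less.hyps[of S' s] S'_sub s first_renewal_nonneg by simp
  qed
qed

lemma incl_excl_chain_weight_nonneg:
  assumes "S \<noteq> {}" "S \<subseteq> {lo..hi}"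
  shows "0 \<le> incl_excl chain_weight S ({lo..hi} - S)"
proof -
  have fin: "finite S" using assms finite_subset by blast
  define m where "m = Max S"
  have m: "m \<in> S" "m \<le> hi" "S \<subseteq> {lo..m}" using assms fin by (auto simp: m_def)
  then have "incl_excl chain_weight S ({lo..hi} - S) = incl_excl chain_weight S ({lo..m} - S) * renewal_tail (hi - m)"
    using incl_excl_chain_weight_extend[of S lo m "hi - m"] by simp
  then show ?thesis
    using incl_excl_chain_weight_nonneg_Max[OF m(3,1)] renewal_tail_nonneg by simp
qed

end

section \<open>Power sums\<close>

lemma powr_increment_eq_derivative:
  assumes "(0::real) < x"
  obtains z where "x < z" "z < x + 1" "(x + 1) powr p - x powr p = p * z powr (p - 1)"
proof -
  have "\<exists>z. x < z \<and> z < x + 1 \<and> (x + 1) powr p - x powr p = ((x + 1) - x) * (p * z powr (p - 1))"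
    using assms by (intro MVT2) (auto intro!: has_real_derivative_powr)
  then show ?thesis using that by auto
qed

lemma powr_increment_ge_concave:
  fixes p x :: real
  assumes "0 < p" "p \<le> 1" "0 \<le> x"
  shows "p * (x + 1) powr (p - 1) \<le> (x + 1) powr p - x powr p"
proof (cases "x = 0")
  case False
  then obtain z where z: "x < z" "z < x + 1" "(x + 1) powr p - x powr p = p * z powr (p - 1)"
    using assms powr_increment_eq_derivative[of x p] by auto
  then have "(x + 1) powr (p - 1) \<le> z powr (p - 1)" using assms by (intro powr_mono2') auto
  then show ?thesis using z assms by simp
qed (use assms in simp)

lemma powr_increment_le_concave:
  fixes p x :: real
  assumes "0 < p" "p \<le> 1" "0 < x"
  shows "(x + 1) powr p - x powr p \<le> p * x powr (p - 1)"
proof -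
  obtain z where z: "x < z" "z < x + 1" "(x + 1) powr p - x powr p = p * z powr (p - 1)"
    using assms powr_increment_eq_derivative[of x p] by auto
  then have "z powr (p - 1) \<le> x powr (p - 1)" using assms by (intro powr_mono2') auto
  then show ?thesis using z assms by simp
qed

lemma powr_increment_ge_convex:
  fixes p x :: real
  assumes "1 \<le> p" "0 \<le> x"
  shows "p * x powr (p - 1) \<le> (x + 1) powr p - x powr p"
proof (cases "x = 0")
  case False
  then obtain z where z: "x < z" "z < x + 1" "(x + 1) powr p - x powr p = p * z powr (p - 1)"
    using assms powr_increment_eq_derivative[of x p] by auto
  then have "x powr (p - 1) \<le> z powr (p - 1)" using assms by (intro powr_mono2) auto
  then show ?thesis using z assms by simp
qed (use assms in simp)

lemma powr_increment_le_convex: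
  fixes p x :: real
  assumes "1 \<le> p" "0 \<le> x"
  shows "(x + 1) powr p - x powr p \<le> p * (x + 1) powr (p - 1)"
proof (cases "x = 0")
  case False
  then obtain z where z: "x < z" "z < x + 1" "(x + 1) powr p - x powr p = p * z powr (p - 1)"
    using assms powr_increment_eq_derivative[of x p] by auto
  then have "z powr (p - 1) \<le> (x + 1) powr (p - 1)" using assms by (intro powr_mono2) auto
  then show ?thesis using z assms by simp
qed (use assms in simp)

definition power_sum :: "real \<Rightarrow> nat \<Rightarrow> real" where
  "power_sum H n = (\<Sum>i<n. real (Suc i) powr (2*H - 2))"

definition pair_power_sum :: "real \<Rightarrow> nat \<Rightarrow> real" where
  "pair_power_sum H n = (\<Sum>i\<in>{1..n}. \<Sum>j\<in>{1..n} - {i}. \<bar>real i - real j\<bar> powr (2*H - 2))"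

lemma power_sum_reflect: "(\<Sum>j\<in>{1..n}. (real (Suc n) - real j) powr (2*H - 2)) = power_sum H n"
  unfolding power_sum_def
  by (rule sum.reindex_bij_witness[where i = "\<lambda>i. n - i" and j = "\<lambda>j. n - j"])
     (auto simp: of_nat_diff add_diff_eq)

lemma pair_power_sum_Suc: "pair_power_sum H (Suc n) = pair_power_sum H n + 2 * power_sum H n"
proof -
  have Suc_n: "{1..Suc n} = insert (Suc n) {1..n}" by auto
  have "pair_power_sum H (Suc n) = (\<Sum>j\<in>{1..Suc n} - {Suc n}. \<bar>real (Suc n) - real j\<bar> powr (2*H - 2)) +
      (\<Sum>i\<in>{1..n}. \<Sum>j\<in>{1..Suc n} - {i}. \<bar>real i - real j\<bar> powr (2*H - 2))"
    unfolding pair_power_sum_def Suc_n by (subst sum.insert) auto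
  also have "(\<Sum>j\<in>{1..Suc n} - {Suc n}. \<bar>real (Suc n) - real j\<bar> powr (2*H - 2)) = power_sum H n"
    unfolding power_sum_reflect[symmetric] by (intro sum.cong) auto
  also have "(\<Sum>i\<in>{1..n}. \<Sum>j\<in>{1..Suc n} - {i}. \<bar>real i - real j\<bar> powr (2*H - 2)) =
      (\<Sum>i\<in>{1..n}. (real (Suc n) - real i) powr (2*H - 2) + (\<Sum>j\<in>{1..n} - {i}. \<bar>real i - real j\<bar> powr (2*H - 2)))"
  proof (intro sum.cong refl)
    fix i assume i: "i \<in> {1..n}"
    then have "{1..Suc n} - {i} = insert (Suc n) ({1..n} - {i})" by auto
    then show "(\<Sum>j\<in>{1..Suc n} - {i}. \<bar>real i - real j\<bar> powr (2*H - 2)) =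
        (real (Suc n) - real i) powr (2*H - 2) + (\<Sum>j\<in>{1..n} - {i}. \<bar>real i - real j\<bar> powr (2*H - 2))"
      using i by (simp add: abs_if)
  qed
  also have "\<dots> = power_sum H n + pair_power_sum H n"
    unfolding pair_power_sum_def power_sum_reflect[symmetric] by (simp add: sum.distrib)
  finally show ?thesis by simp
qed

lemma pair_power_sum_eq: "pair_power_sum H n = 2 * (\<Sum>k<n. power_sum H k)"
  by (induction n) (simp add: pair_power_sum_def, simp add: pair_power_sum_Suc)

context
  fixes H :: real
  assumes H: "1/2 < H" "H < 1"
begin

lemma power_sum_le: "power_sum H n \<le> real n powr (2*H - 1) / (2*H - 1)"
proof -
  have "power_sum H n \<le> (\<Sum>i<n. (real (Suc i) powr (2*H - 1) - real i powr (2*H - 1)) / (2*H - 1))"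
    unfolding power_sum_def
  proof (intro sum_mono)
    fix i
    have "(2*H - 1) * (real i + 1) powr (2*H - 1 - 1) \<le> (real i + 1) powr (2*H - 1) - real i powr (2*H - 1)"
      using H by (intro powr_increment_ge_concave) auto
    then show "real (Suc i) powr (2*H - 2) \<le> (real (Suc i) powr (2*H - 1) - real i powr (2*H - 1)) / (2*H - 1)"
      using H by (simp add: field_simps add.commute)
  qed
  also have "\<dots> = (\<Sum>i<n. real (Suc i) powr (2*H - 1) / (2*H - 1) - real i powr (2*H - 1) / (2*H - 1))"
    by (simp add: diff_divide_distrib)
  also have "\<dots> = real n powr (2*H - 1) / (2*H - 1)"
    by (subst sum_lessThan_telescope[where f = "\<lambda>i. real i powr (2*H - 1) / (2*H - 1)"]) simp
  finally show ?thesis .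
qed

lemma power_sum_ge: "(real (Suc n) powr (2*H - 1) - 1) / (2*H - 1) \<le> power_sum H n"
proof -
  have "(\<Sum>i<n. real (Suc (Suc i)) powr (2*H - 1) / (2*H - 1) - real (Suc i) powr (2*H - 1) / (2*H - 1))
      \<le> power_sum H n"
    unfolding power_sum_def
  proof (intro sum_mono)
    fix i
    have "(real (Suc i) + 1) powr (2*H - 1) - real (Suc i) powr (2*H - 1) \<le> (2*H - 1) * real (Suc i) powr (2*H - 1 - 1)"
      using H by (intro powr_increment_le_concave) auto
    then have "((real (Suc i) + 1) powr (2*H - 1) - real (Suc i) powr (2*H - 1)) / (2*H - 1) \<le> real (Suc i) powr (2*H - 2)"
      using H by (simp add: pos_divide_le_eq mult.commute)
    moreover have "real (Suc i) + 1 = real (Suc (Suc i))" by simp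
    ultimately show "real (Suc (Suc i)) powr (2*H - 1) / (2*H - 1) - real (Suc i) powr (2*H - 1) / (2*H - 1)
        \<le> real (Suc i) powr (2*H - 2)"
      by (simp add: diff_divide_distrib)
  qed
  moreover have "(\<Sum>i<n. real (Suc (Suc i)) powr (2*H - 1) / (2*H - 1) - real (Suc i) powr (2*H - 1) / (2*H - 1))
      = real (Suc n) powr (2*H - 1) / (2*H - 1) - 1 / (2*H - 1)"
    by (subst sum_lessThan_telescope[where f = "\<lambda>i. real (Suc i) powr (2*H - 1) / (2*H - 1)"]) simp
  ultimately show ?thesis by (simp add: diff_divide_distrib)
qed

lemma pair_power_sum_le: "pair_power_sum H n \<le> real n powr (2*H) / (H * (2*H - 1))"
proof -
  have "(\<Sum>k<n. power_sum H k) \<le> (\<Sum>k<n. real k powr (2*H - 1) / (2*H - 1))"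
    by (intro sum_mono power_sum_le)
  also have "\<dots> \<le> (\<Sum>k<n. (real (Suc k) powr (2*H) / (2*H) - real k powr (2*H) / (2*H)) / (2*H - 1))"
  proof (intro sum_mono divide_right_mono)
    fix k
    have "2*H * real k powr (2*H - 1) \<le> (real k + 1) powr (2*H) - real k powr (2*H)"
      using H by (intro powr_increment_ge_convex) auto
    then show "real k powr (2*H - 1) \<le> real (Suc k) powr (2*H) / (2*H) - real k powr (2*H) / (2*H)"
      using H by (simp add: field_simps add.commute)
  qed (use H in simp)
  also have "\<dots> = (\<Sum>k<n. real (Suc k) powr (2*H) / (2*H) / (2*H - 1) - real k powr (2*H) / (2*H) / (2*H - 1))"
    by (simp add: diff_divide_distrib)
  also have "\<dots> = real n powr (2*H) / (2*H) / (2*H - 1)"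
    by (subst sum_lessThan_telescope[where f = "\<lambda>i. real i powr (2*H) / (2*H) / (2*H - 1)"]) simp
  finally show ?thesis unfolding pair_power_sum_eq using H by (simp add: field_simps)
qed

lemma pair_power_sum_ge: "2 * ((real n powr (2*H) / (2*H) - real n) / (2*H - 1)) \<le> pair_power_sum H n"
proof -
  have "(\<Sum>k<n. (real (Suc k) powr (2*H) / (2*H) - real k powr (2*H) / (2*H) - 1) / (2*H - 1))
      \<le> (\<Sum>k<n. (real (Suc k) powr (2*H - 1) - 1) / (2*H - 1))"
  proof (intro sum_mono divide_right_mono)
    fix k
    have "(real k + 1) powr (2*H) - real k powr (2*H) \<le> 2*H * (real k + 1) powr (2*H - 1)"
      using H by (intro powr_increment_le_convex) auto
    then show "real (Suc k) powr (2*H) / (2*H) - real k powr (2*H) / (2*H) - 1 \<le> real (Suc k) powr (2*H - 1) - 1"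
      using H by (simp add: field_simps add.commute)
  qed (use H in simp)
  also have "\<dots> \<le> (\<Sum>k<n. power_sum H k)" by (intro sum_mono power_sum_ge)
  finally have "(\<Sum>k<n. (real (Suc k) powr (2*H) / (2*H) - real k powr (2*H) / (2*H)) - 1) / (2*H - 1)
      \<le> (\<Sum>k<n. power_sum H k)"
    by (simp add: sum_divide_distrib)
  moreover have "(\<Sum>k<n. real (Suc k) powr (2*H) / (2*H) - real k powr (2*H) / (2*H)) = real n powr (2*H) / (2*H)"
    by (subst sum_lessThan_telescope[where f = "\<lambda>i. real i powr (2*H) / (2*H)"]) simp
  ultimately have "(real n powr (2*H) / (2*H) - real n) / (2*H - 1) \<le> (\<Sum>k<n. power_sum H k)"
    by (simp add: sum_subtractf)
  then show ?thesis unfolding pair_power_sum_eq by linarith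
qed

lemma pair_power_sum_ratio_tendsto:
  "(\<lambda>n. pair_power_sum H n / real n powr (2*H)) \<longlonglongrightarrow> 1 / (H * (2*H - 1))"
proof (rule tendsto_sandwich)
  have "(\<lambda>n. real n powr (1 - 2*H)) \<longlonglongrightarrow> 0"
    using H by (intro tendsto_neg_powr filterlim_real_sequentially) auto
  then have "(\<lambda>n. 1 / (H * (2*H - 1)) - 2 / (2*H - 1) * real n powr (1 - 2*H))
      \<longlonglongrightarrow> 1 / (H * (2*H - 1)) - 2 / (2*H - 1) * 0"
    by (intro tendsto_intros)
  then show "(\<lambda>n. 1 / (H * (2*H - 1)) - 2 / (2*H - 1) * real n powr (1 - 2*H)) \<longlonglongrightarrow> 1 / (H * (2*H - 1))"
    by simp
  show "\<forall>\<^sub>F n in sequentially. 1 / (H * (2*H - 1)) - 2 / (2*H - 1) * real n powr (1 - 2*H)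
      \<le> pair_power_sum H n / real n powr (2*H)"
    using eventually_gt_at_top[of 0]
  proof eventually_elim
    case (elim n)
    define q where "q = real n powr (2*H)"
    have q: "0 < q" using elim by (simp add: q_def)
    have eq: "real n powr (1 - 2*H) = real n / q"
      using elim by (simp add: q_def powr_diff)
    have "2 * ((q / (2*H) - real n) / (2*H - 1)) / q = 2 / (2*H - 1) * ((q / (2*H) - real n) / q)"
      by simp
    also have "(q / (2*H) - real n) / q = 1 / (2*H) - real n / q"
      using q by (simp add: diff_divide_distrib)
    also have "2 / (2*H - 1) * (1 / (2*H) - real n / q) =
        2 / (2*H - 1) * (1 / (2*H)) - 2 / (2*H - 1) * real n powr (1 - 2*H)"
      unfolding eq by (simp add: right_diff_distrib)
    also have "2 / (2*H - 1) * (1 / (2*H)) = 1 / (H * (2*H - 1))" using H by (simp add: field_simps)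
    finally have "1 / (H * (2*H - 1)) - 2 / (2*H - 1) * real n powr (1 - 2*H)
        = 2 * ((q / (2*H) - real n) / (2*H - 1)) / q" ..
    then have "1 / (H * (2*H - 1)) - 2 / (2*H - 1) * real n powr (1 - 2*H)
        = 2 * ((real n powr (2*H) / (2*H) - real n) / (2*H - 1)) / real n powr (2*H)"
      by (simp add: q_def)
    also have "\<dots> \<le> pair_power_sum H n / real n powr (2*H)"
      using pair_power_sum_ge elim by (intro divide_right_mono) auto
    finally show ?case .
  qed
  show "\<forall>\<^sub>F n in sequentially. pair_power_sum H n / real n powr (2*H) \<le> 1 / (H * (2*H - 1))"
    using eventually_gt_at_top[of 0]
  proof eventually_elim
    case (elim n)
    have "pair_power_sum H n / real n powr (2*H) \<le> real n powr (2*H) / (H * (2*H - 1)) / real n powr (2*H)"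
      using pair_power_sum_le elim by (intro divide_right_mono) auto
    then show ?case using elim by simp
  qed
qed simp

end

section \<open>Moments of finite distributions\<close>

lemma cov_pmf_eq:
  fixes X Y :: "'a \<Rightarrow> real"
  assumes "finite (set_pmf P)"
  shows "cov_pmf P X Y = measure_pmf.expectation P (\<lambda>s. X s * Y s)
     - measure_pmf.expectation P X * measure_pmf.expectation P Y"
proof -
  let ?E = "measure_pmf.expectation P"
  have int: "integrable (measure_pmf P) f" for f :: "'a \<Rightarrow> real"
    using assms by (rule integrable_measure_pmf_finite)
  have "cov_pmf P X Y = ?E (\<lambda>s. X s * Y s - ?E X * Y s - (?E Y * X s - ?E X * ?E Y))"
    unfolding cov_pmf_def by (rule arg_cong[where f = ?E]) (auto simp: algebra_simps)
  also have "\<dots> = ?E (\<lambda>s. X s * Y s) - ?E X * ?E Y"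
    by (simp add: int)
  finally show ?thesis .
qed

lemma variance_pmf_eq:
  fixes X :: "'a \<Rightarrow> real"
  assumes "finite (set_pmf P)"
  shows "measure_pmf.variance P X = measure_pmf.expectation P (\<lambda>s. (X s)\<^sup>2) - (measure_pmf.expectation P X)\<^sup>2"
  using assms by (intro measure_pmf.variance_eq integrable_measure_pmf_finite)

lemma Xc_eq_indicator: "Xc i = indicator {S. i \<in> S}"
  by (auto simp: Xc_def fun_eq_iff)

lemma Xc_mult_eq_indicator: "(\<lambda>S. Xc i S * Xc j S) = indicator {S. i \<in> S \<and> j \<in> S}"
  by (auto simp: Xc_def fun_eq_iff)

section \<open>The generalized Bernoulli process II\<close>

definition gap_weight :: "real \<Rightarrow> real \<Rightarrow> nat \<Rightarrow> real" where
  "gap_weight H c d = (if d = 0 then 1 else c * real d powr (2*H - 2))"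

lemma kaluza_sequence_gap_weight:
  assumes H: "H \<le> 1" and c: "0 < c" "c \<le> 2 powr (2*H - 2)"
  shows "kaluza_sequence (gap_weight H c)"
proof
  have "2 powr (2*H - 2) \<le> (2::real) powr 0" using H by (intro powr_mono) auto
  then have c1: "c \<le> 1" using c by simp
  show "gap_weight H c 0 = 1" by (simp add: gap_weight_def)
  show "0 < gap_weight H c d" for d using c by (simp add: gap_weight_def)
  show "gap_weight H c d' \<le> gap_weight H c d" if "d \<le> d'" for d d'
  proof (cases "d = 0")
    case True
    have "real d' powr (2*H - 2) \<le> real d' powr 0" if "d' \<noteq> 0"
      using that H by (intro powr_mono) auto
    then show ?thesis using True c1 c by (auto simp: gap_weight_def intro: mult_le_one)
  next
    case False
    then have "real d' powr (2*H - 2) \<le> real d powr (2*H - 2)"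
      using that H by (intro powr_mono2') auto
    then show ?thesis using False that c by (auto simp: gap_weight_def)
  qed
  show "gap_weight H c (Suc m) * gap_weight H c m' \<le> gap_weight H c (Suc m') * gap_weight H c m"
    if "m \<le> m'" for m m'
  proof (cases "m = 0")
    case True
    show ?thesis
    proof (cases "m' = 0")
      case False
      text \<open>Log-convexity at the origin is exactly where \<open>c \<le> 2 powr (2*H - 2)\<close> is needed.\<close>
      have "(real m' / real (Suc m')) powr (2*H - 2) \<le> (1/2) powr (2*H - 2)"
        using False H by (intro powr_mono2') (auto simp: field_simps)
      also have "\<dots> = 1 / 2 powr (2*H - 2)" by (simp add: powr_divide)
      finally have "c * (real m' / real (Suc m')) powr (2*H - 2) \<le> 2 powr (2*H - 2) * (1 / 2 powr (2*H - 2))"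
        using c by (intro mult_mono) auto
      then have "c * (real m' / real (Suc m')) powr (2*H - 2) \<le> 1" by simp
      then have "c * real m' powr (2*H - 2) \<le> real (Suc m') powr (2*H - 2)"
        by (simp add: powr_divide field_simps)
      then show ?thesis
        using True False c by (simp add: gap_weight_def)
    qed (simp add: True)
  next
    case False
    then have m': "m' \<noteq> 0" using that by auto
    have "(real (Suc m) / real m) powr (2*H - 2) \<le> (real (Suc m') / real m') powr (2*H - 2)"
      using False m' that H by (intro powr_mono2') (auto simp: field_simps)
    then have "real (Suc m) powr (2*H - 2) * real m' powr (2*H - 2) \<le>
        real (Suc m') powr (2*H - 2) * real m powr (2*H - 2)"
      using False m' by (simp add: powr_divide divide_simps)
    then show ?thesis
      using False m' c by (simp add: gap_weight_def mult_left_mono mult_ac)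
  qed
qed

locale gbp =
  fixes H c lam :: real
  assumes H: "1/2 < H" "H < 1"
    and c: "0 < c" "c < 2 powr (2*H - 2)"
    and lam: "0 < lam" "lam < c"
begin

sublocale kaluza_sequence "gap_weight H c"
  using H c by (intro kaluza_sequence_gap_weight) auto

lemma pn_pos: "1 \<le> n \<Longrightarrow> 0 < pn H lam n"
  using lam by (simp add: pn_def)

lemma c_le_1: "c \<le> 1"
  using u_antimono[of 0 1] by (simp add: gap_weight_def)

lemma pn_le_gap_weight:
  assumes "1 \<le> n"
  shows "pn H lam n \<le> gap_weight H c (n - 1)"
proof (cases "n = 1")
  case True
  have "lam \<le> 1" using lam c_le_1 by simp
  then show ?thesis using True by (simp add: pn_def u_0)
next
  case False
  then have "real n powr (2*H - 2) \<le> real (n - 1) powr (2*H - 2)"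
    using assms H by (intro powr_mono2') auto
  then have "lam * real n powr (2*H - 2) \<le> c * real (n - 1) powr (2*H - 2)"
    using lam by (intro mult_mono) auto
  then show ?thesis using False assms by (simp add: pn_def gap_weight_def)
qed

lemma pn_less_1:
  assumes "1 \<le> n"
  shows "pn H lam n < 1"
proof -
  have "real n powr (2*H - 2) \<le> real n powr 0" using assms H by (intro powr_mono) auto
  then have "pn H lam n \<le> lam" using assms lam by (simp add: pn_def mult_left_le)
  then show ?thesis using lam c_le_1 by simp
qed

text \<open>The prescribed probability of \<open>{U \<subseteq> S}\<close>, i.e. the case \<open>B = {}\<close> of \<open>GBP2\<close>.\<close>
definition ones_prob :: "nat \<Rightarrow> nat set \<Rightarrow> real" where
  "ones_prob n U = pn H lam n * c powi (int (card U) - 1) * Lcirc H c lam n U"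

lemma ones_prob_empty: "1 \<le> n \<Longrightarrow> ones_prob n {} = 1"
  using pn_pos[of n] c by (simp add: ones_prob_def Lcirc_def power_int_def)

lemma Lcirc_eq_gap_prod:
  "finite U \<Longrightarrow> U \<noteq> {} \<Longrightarrow> Lcirc H c lam n U = gap_prod (\<lambda>d. real d powr (2*H - 2)) (sorted_list_of_set U)"
  using prod_eq_gap_prod[where xs = "sorted_list_of_set U"] by (simp add: Lcirc_def Let_def)

lemma ones_prob_eq_chain_weight:
  assumes "finite U" "U \<noteq> {}"
  shows "ones_prob n U = pn H lam n * chain_weight U"
proof -
  have "1 \<le> card U" using assms by (simp add: Suc_leI card_gt_0_iff)
  then have "int (card U) - 1 = int (card U - 1)" by simp
  then have "c powi (int (card U) - 1) = c ^ (card U - 1)" by (simp only: power_int_of_nat)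
  moreover have "chain_weight U = c ^ (card U - 1) * gap_prod (\<lambda>d. real d powr (2*H - 2)) (sorted_list_of_set U)"
    unfolding chain_weight_def using assms by (subst gap_prod_scale) (auto simp: gap_weight_def)
  ultimately show ?thesis using assms by (simp add: ones_prob_def Lcirc_eq_gap_prod)
qed

lemma incl_excl_ones_prob:
  assumes "finite A" "A \<noteq> {}" "finite B"
  shows "incl_excl (ones_prob n) A B = pn H lam n * incl_excl chain_weight A B"
  unfolding incl_excl_def sum_distrib_left
proof (intro sum.cong refl)
  fix B' assume "B' \<in> Pow B"
  then have "finite (A \<union> B')" "A \<union> B' \<noteq> {}" using assms by (auto intro: finite_subset)
  then show "(-1) ^ card B' * ones_prob n (A \<union> B') = pn H lam n * ((-1) ^ card B' * chain_weight (A \<union> B'))"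
    by (simp add: ones_prob_eq_chain_weight)
qed

lemma incl_excl_ones_prob_Dcirc:
  assumes "A \<inter> B = {}" "finite A" "finite B"
  shows "pn H lam n * c powi (int (card A) - 1) * Dcirc H c lam n A B = incl_excl (ones_prob n) A B"
  unfolding Dcirc_def incl_excl_def sum_distrib_left
proof (intro sum.cong refl)
  fix B' assume "B' \<in> Pow B"
  then have "card (A \<union> B') = card A + card B'"
    using assms by (intro card_Un_disjoint) (auto intro: finite_subset)
  have "c powi (int (card A) - 1) * c ^ card B' = c powi (int (card A) - 1 + int (card B'))"
    using c by (simp add: power_int_add)
  also have "int (card A) - 1 + int (card B') = int (card (A \<union> B')) - 1"
    using \<open>card (A \<union> B') = card A + card B'\<close> by simp
  finally have "c powi (int (card A) - 1) * c ^ card B' = c powi (int (card (A \<union> B')) - 1)" .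
  then show "pn H lam n * c powi (int (card A) - 1) * ((-1) ^ card B' * c ^ card B' * Lcirc H c lam n (A \<union> B'))
     = (-1) ^ card B' * ones_prob n (A \<union> B')"
    unfolding ones_prob_def by (simp add: mult_ac)
qed

lemma GBP2_iff:
  "GBP2 H c lam n P \<longleftrightarrow> set_pmf P \<subseteq> Pow {1..n} \<and>
     (\<forall>A B. A \<subseteq> {1..n} \<longrightarrow> B \<subseteq> {1..n} \<longrightarrow> A \<inter> B = {} \<longrightarrow>
        measure_pmf.prob P {S. A \<subseteq> S \<and> B \<inter> S = {}} = incl_excl (ones_prob n) A B)"
proof -
  have "pn H lam n * c powi (int (card A) - 1) * Dcirc H c lam n A B = incl_excl (ones_prob n) A B"
    if "A \<subseteq> {1..n}" "B \<subseteq> {1..n}" "A \<inter> B = {}" for A B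
    using that by (intro incl_excl_ones_prob_Dcirc) (auto intro: finite_subset)
  then show ?thesis unfolding GBP2_def by auto
qed

lemma GBP2_prob:
  "GBP2 H c lam n P \<Longrightarrow> A \<subseteq> {1..n} \<Longrightarrow> B \<subseteq> {1..n} \<Longrightarrow> A \<inter> B = {} \<Longrightarrow>
    measure_pmf.prob P {S. A \<subseteq> S \<and> B \<inter> S = {}} = incl_excl (ones_prob n) A B"
  by (simp add: GBP2_iff)

lemma incl_excl_ones_prob_interval:
  "1 \<le> n \<Longrightarrow> incl_excl (ones_prob n) {} {1..m} = 1 - pn H lam n * (\<Sum>k<m. renewal_tail k)"
proof (induction m)
  case (Suc m)
  have "incl_excl (ones_prob n) {Suc m} {1..m} = pn H lam n * incl_excl chain_weight {1 + m} {1..<1 + m}"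
    by (simp add: incl_excl_ones_prob atLeastLessThanSuc_atLeastAtMost)
  then have "incl_excl (ones_prob n) {Suc m} {1..m} = pn H lam n * renewal_tail m"
    by (simp only: renewal_tail_eq_incl_excl)
  moreover have "{1..Suc m} = insert (Suc m) {1..m}" by auto
  ultimately show ?case
    using Suc incl_excl_insert[of "{1..m}" "Suc m" "{}" "ones_prob n"] by (simp add: algebra_simps)
qed (simp add: ones_prob_empty)

lemma incl_excl_ones_prob_nonneg:
  assumes "1 \<le> n" "S \<subseteq> {1..n}"
  shows "0 \<le> incl_excl (ones_prob n) S ({1..n} - S)"
proof (cases "S = {}")
  case True
  have "pn H lam n * (\<Sum>k<n. renewal_tail k) \<le> gap_weight H c (n - 1) * (\<Sum>k<n. renewal_tail k)"
    using assms pn_le_gap_weight renewal_tail_nonneg by (intro mult_right_mono sum_nonneg) auto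
  also have "\<dots> = gap_weight H c (n - 1) * (\<Sum>k<Suc (n - 1). renewal_tail k)" using assms by simp
  also have "\<dots> \<le> 1" by (rule renewal_tail_sum_le)
  finally show ?thesis using True assms incl_excl_ones_prob_interval by simp
next
  case False
  then have "0 \<le> pn H lam n * incl_excl chain_weight S ({1..n} - S)"
    using False assms pn_pos[of n] incl_excl_chain_weight_nonneg[of S 1 n] by simp
  then show ?thesis
    using False assms finite_subset[OF assms(2)] by (simp add: incl_excl_ones_prob)
qed

lemma GBP2_exists:
  assumes "1 \<le> n"
  shows "\<exists>P. GBP2 H c lam n P"
proof -
  obtain P where "set_pmf P \<subseteq> Pow {1..n}"
    "\<And>A B. A \<subseteq> {1..n} \<Longrightarrow> B \<subseteq> {1..n} \<Longrightarrow> A \<inter> B = {} \<Longrightarrow>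
       measure_pmf.prob P {S. A \<subseteq> S \<and> B \<inter> S = {}} = incl_excl (ones_prob n) A B"
    using ex_pmf_incl_excl[of "{1..n}" "ones_prob n"] assms ones_prob_empty incl_excl_ones_prob_nonneg
    by blast
  then show ?thesis unfolding GBP2_iff by blast
qed

lemma GBP2_unique:
  assumes "GBP2 H c lam n P" "GBP2 H c lam n Q"
  shows "P = Q"
proof (rule pmf_eqI)
  fix S
  have supp: "set_pmf P \<subseteq> Pow {1..n}" "set_pmf Q \<subseteq> Pow {1..n}" using assms by (auto simp: GBP2_iff)
  show "pmf P S = pmf Q S"
  proof (cases "S \<subseteq> {1..n}")
    case True
    then show ?thesis using assms supp by (simp add: pmf_eq_atom_prob GBP2_prob)
  next
    case False
    then have "S \<notin> set_pmf P" "S \<notin> set_pmf Q" using supp by auto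
    then show ?thesis by (simp add: set_pmf_eq)
  qed
qed

lemma ones_prob_translate:
  assumes "finite U" "\<forall>i\<in>U. 0 \<le> int i + m"
  shows "ones_prob n ((\<lambda>i. nat (int i + m)) ` U) = ones_prob n U"
proof (cases "U = {}")
  case False
  let ?sh = "\<lambda>i. nat (int i + m)"
  have sh: "int (?sh i) = int i + m" if "i \<in> U" for i using assms(2) that by auto
  have mono: "\<forall>x\<in>U. \<forall>y\<in>U. x < y \<longrightarrow> ?sh x < ?sh y \<and> ?sh y - ?sh x = y - x"
  proof (intro ballI impI)
    fix x y assume "x \<in> U" "y \<in> U" "x < y"
    then show "?sh x < ?sh y \<and> ?sh y - ?sh x = y - x" using sh[of x] sh[of y] by linarith
  qed
  have "inj_on ?sh U" by (rule inj_onI) (metis sh add_right_cancel of_nat_eq_iff)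
  moreover have "Lcirc H c lam n (?sh ` U) = Lcirc H c lam n U"
    using False assms(1) mono
    by (simp add: Lcirc_eq_gap_prod sorted_list_of_set_image gap_prod_map)
  ultimately show ?thesis by (simp add: ones_prob_def card_image)
qed (simp add: ones_prob_def)

lemma GBP2_stationary:
  assumes P: "GBP2 H c lam n P" and I: "I \<subseteq> {1..n}"
    and m: "\<forall>i\<in>I. 1 \<le> int i + m \<and> int i + m \<le> int n"
  shows "map_pmf (\<lambda>S. {i\<in>I. nat (int i + m) \<in> S}) P = map_pmf (\<lambda>S. S \<inter> I) P"
proof (rule pmf_eqI)
  fix R
  let ?sh = "\<lambda>i. nat (int i + m)"
  have inj: "inj_on ?sh I" using m by (intro inj_onI) auto
  have sh_range: "?sh ` I \<subseteq> {1..n}" using m by force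
  have restrict: "(\<lambda>S. S \<inter> I) = (\<lambda>S. {i\<in>I. id i \<in> S})" by auto
  show "pmf (map_pmf (\<lambda>S. {i\<in>I. ?sh i \<in> S}) P) R = pmf (map_pmf (\<lambda>S. S \<inter> I) P) R"
  proof (cases "R \<subseteq> I")
    case True
    have "measure_pmf.prob P {S. ?sh ` R \<subseteq> S \<and> ?sh ` (I - R) \<inter> S = {}} =
        incl_excl (ones_prob n) (?sh ` R) (?sh ` (I - R))"
      using True sh_range inj_on_image_Int[OF inj, of R "I - R"] by (intro GBP2_prob[OF P]) auto
    also have "\<dots> = incl_excl (ones_prob n) R (I - R)"
  proof (intro incl_excl_image ones_prob_translate)
    fix U assume "U \<subseteq> I"
    then show "finite U" using I by (meson finite_atLeastAtMost finite_subset subset_trans)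
    show "\<forall>i\<in>U. 0 \<le> int i + m" using \<open>U \<subseteq> I\<close> m by force
  qed (use True inj in auto)
    also have "\<dots> = measure_pmf.prob P {S. R \<subseteq> S \<and> (I - R) \<inter> S = {}}"
      using True I by (intro GBP2_prob[OF P, symmetric]) auto
    finally show ?thesis unfolding restrict pmf_map_pmf_restrict using True by simp
  qed (simp add: pmf_map_pmf_restrict restrict)
qed

context
  fixes n :: nat and P :: "nat set pmf"
  assumes n: "1 \<le> n" and P: "GBP2 H c lam n P"
begin

lemma finite_set_pmf: "finite (set_pmf P)"
  using P finite_subset[of "set_pmf P" "Pow {1..n}"] by (simp add: GBP2_iff)

lemma prob_mem: "i \<in> {1..n} \<Longrightarrow> measure_pmf.prob P {S. i \<in> S} = pn H lam n"
  using GBP2_prob[OF P, of "{i}" "{}"] by (simp add: ones_prob_eq_chain_weight)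

lemma prob_not_mem: "i \<in> {1..n} \<Longrightarrow> measure_pmf.prob P {S. i \<notin> S} = 1 - pn H lam n"
  using GBP2_prob[OF P, of "{}" "{i}"] n by (simp add: incl_excl_singleton ones_prob_empty ones_prob_eq_chain_weight)

lemma prob_pair_mem:
  assumes "i \<in> {1..n}" "j \<in> {1..n}" "i \<noteq> j"
  shows "measure_pmf.prob P {S. i \<in> S \<and> j \<in> S} = pn H lam n * c * \<bar>real i - real j\<bar> powr (2*H - 2)"
proof -
  have "chain_weight {i, j} = c * \<bar>real i - real j\<bar> powr (2*H - 2)"
    using assms(3) chain_weight_pair[of i j] chain_weight_pair[of j i]
    by (cases "i < j") (auto simp: gap_weight_def insert_commute of_nat_diff)
  then show ?thesis
    using GBP2_prob[OF P, of "{i, j}" "{}"] assms by (simp add: ones_prob_eq_chain_weight)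
qed

lemma expectation_Xc: "i \<in> {1..n} \<Longrightarrow> measure_pmf.expectation P (Xc i) = pn H lam n"
  by (simp add: Xc_eq_indicator prob_mem)

lemma expectation_Xc_mult:
  "i \<in> {1..n} \<Longrightarrow> j \<in> {1..n} \<Longrightarrow> measure_pmf.expectation P (\<lambda>S. Xc i S * Xc j S) =
    (if i = j then pn H lam n else pn H lam n * c * \<bar>real i - real j\<bar> powr (2*H - 2))"
  by (simp add: Xc_mult_eq_indicator prob_pair_mem prob_mem)

lemma cov_Xc:
  "i \<in> {1..n} \<Longrightarrow> j \<in> {1..n} \<Longrightarrow> i \<noteq> j \<Longrightarrow>
    cov_pmf P (Xc i) (Xc j) = pn H lam n * c * \<bar>real i - real j\<bar> powr (2*H - 2) - (pn H lam n)\<^sup>2"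
  by (simp add: cov_pmf_eq[OF finite_set_pmf] expectation_Xc_mult expectation_Xc power2_eq_square)

lemma variance_Xc: "i \<in> {1..n} \<Longrightarrow> measure_pmf.variance P (Xc i) = pn H lam n - (pn H lam n)\<^sup>2"
  using expectation_Xc_mult[of i i]
  by (subst variance_pmf_eq[OF finite_set_pmf]) (simp add: expectation_Xc power2_eq_square)

lemma corr_Xc:
  assumes "i \<in> {1..n}" "j \<in> {1..n}" "i \<noteq> j"
  shows "corr_pmf P (Xc i) (Xc j) = (c * \<bar>real i - real j\<bar> powr (2*H - 2) - pn H lam n) / (1 - pn H lam n)"
proof -
  define p where "p = pn H lam n"
  have p: "0 < p" "p < 1" using pn_pos[OF n] pn_less_1[OF n] by (auto simp: p_def)
  then have "sqrt ((p - p\<^sup>2) * (p - p\<^sup>2)) = p - p\<^sup>2"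
    by (simp add: power2_eq_square mult_left_le_one_le)
  then have "corr_pmf P (Xc i) (Xc j) = (p * c * \<bar>real i - real j\<bar> powr (2*H - 2) - p\<^sup>2) / (p - p\<^sup>2)"
    using assms by (simp add: corr_pmf_def cov_Xc variance_Xc p_def)
  also have "\<dots> = (c * \<bar>real i - real j\<bar> powr (2*H - 2) - p) / (1 - p)"
    using p by (simp add: power2_eq_square field_simps)
  finally show ?thesis by (simp add: p_def)
qed

lemma expectation_sum_Xc: "measure_pmf.expectation P (\<lambda>S. \<Sum>i=1..n. Xc i S) = lam * real n powr (2*H - 1)"
proof -
  have "measure_pmf.expectation P (\<lambda>S. \<Sum>i=1..n. Xc i S) = real n * pn H lam n"
    by (simp add: integrable_measure_pmf_finite[OF finite_set_pmf] expectation_Xc)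
  also have "\<dots> = lam * (real n powr 1 * real n powr (2*H - 2))" using n by (simp add: pn_def)
  also have "real n powr 1 * real n powr (2*H - 2) = real n powr (2*H - 1)"
    by (subst powr_add[symmetric]) simp
  finally show ?thesis .
qed

lemma second_moment_sum_Xc:
  "measure_pmf.expectation P (\<lambda>S. (\<Sum>i=1..n. Xc i S)\<^sup>2) = real n * pn H lam n + pn H lam n * c * pair_power_sum H n"
proof -
  have "measure_pmf.expectation P (\<lambda>S. (\<Sum>i=1..n. Xc i S)\<^sup>2) =
      (\<Sum>i=1..n. \<Sum>j=1..n. measure_pmf.expectation P (\<lambda>S. Xc i S * Xc j S))"
    by (simp add: power2_eq_square sum_product integrable_measure_pmf_finite[OF finite_set_pmf])
  also have "\<dots> = (\<Sum>i=1..n. pn H lam n + (\<Sum>j\<in>{1..n} - {i}. pn H lam n * c * \<bar>real i - real j\<bar> powr (2*H - 2)))"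
  proof (intro sum.cong refl)
    fix i assume i: "i \<in> {1..n}"
    then show "(\<Sum>j=1..n. measure_pmf.expectation P (\<lambda>S. Xc i S * Xc j S)) =
        pn H lam n + (\<Sum>j\<in>{1..n} - {i}. pn H lam n * c * \<bar>real i - real j\<bar> powr (2*H - 2))"
      by (simp add: sum.remove[of _ i] expectation_Xc_mult)
  qed
  also have "\<dots> = real n * pn H lam n + pn H lam n * c * pair_power_sum H n"
    unfolding pair_power_sum_def sum_distrib_left sum.distrib by simp
  finally show ?thesis .
qed

end

lemma corr_Xc_tendsto:
  assumes P: "\<And>n. 1 \<le> n \<Longrightarrow> GBP2 H c lam n (P n)" and ij: "1 \<le> i" "1 \<le> j" "i \<noteq> j"
  shows "(\<lambda>n. corr_pmf (P n) (Xc i) (Xc j)) \<longlonglongrightarrow> c * \<bar>real i - real j\<bar> powr (2*H - 2)"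
proof -
  let ?r = "c * \<bar>real i - real j\<bar> powr (2*H - 2)"
  have pn_lim: "(\<lambda>n. pn H lam n) \<longlonglongrightarrow> 0"
    using H tendsto_mult_right_zero[OF tendsto_neg_powr[OF _ filterlim_real_sequentially], of "2*H - 2" lam]
    by (simp add: pn_def)
  have "(\<lambda>n. (?r - pn H lam n) / (1 - pn H lam n)) \<longlonglongrightarrow> (?r - 0) / (1 - 0)"
    by (intro tendsto_intros pn_lim) auto
  moreover have "\<forall>\<^sub>F n in sequentially. (?r - pn H lam n) / (1 - pn H lam n) = corr_pmf (P n) (Xc i) (Xc j)"
    using eventually_ge_at_top[of "max i j"]
  proof eventually_elim
    case (elim n)
    then have n: "1 \<le> n" using ij by simp
    show ?case using corr_Xc[OF n P[OF n]] elim ij by simp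
  qed
  ultimately show ?thesis by (simp add: Lim_transform_eventually)
qed

lemma second_moment_sum_Xc_tendsto:
  assumes P: "\<And>n. 1 \<le> n \<Longrightarrow> GBP2 H c lam n (P n)"
  shows "(\<lambda>n. measure_pmf.expectation (P n) (\<lambda>S. (\<Sum>i=1..n. Xc i S)\<^sup>2) / real n powr (4*H - 2))
    \<longlonglongrightarrow> lam * c / ((2*H - 1) * H)"
proof -
  have "(\<lambda>n. lam * real n powr (1 - 2*H) + lam * c * (pair_power_sum H n / real n powr (2*H)))
      \<longlonglongrightarrow> lam * 0 + lam * c * (1 / (H * (2*H - 1)))"
    using H by (intro tendsto_intros tendsto_neg_powr filterlim_real_sequentially pair_power_sum_ratio_tendsto) auto
  moreover have "\<forall>\<^sub>F n in sequentially. lam * real n powr (1 - 2*H) + lam * c * (pair_power_sum H n / real n powr (2*H)) =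
      measure_pmf.expectation (P n) (\<lambda>S. (\<Sum>i=1..n. Xc i S)\<^sup>2) / real n powr (4*H - 2)"
    using eventually_ge_at_top[of 1]
  proof eventually_elim
    case (elim n)
    define x where "x = real n"
    have x: "0 < x" using elim by (simp add: x_def)
    have "x powr (4*H - 2) = x powr (2*H - 2) * x powr (2*H)"
      by (simp add: powr_add[symmetric])
    moreover have "x powr (1 - 2*H) = x / x powr (2*H)" using x by (simp add: powr_diff)
    ultimately show ?case
      using x second_moment_sum_Xc[OF elim P[OF elim]] by (simp add: pn_def x_def[symmetric] field_simps)
  qed
  ultimately show ?thesis using H by (simp add: Lim_transform_eventually field_simps)
qed

lemma second_moment_sum_Xc_asymp:
  assumes P: "\<And>n. 1 \<le> n \<Longrightarrow> GBP2 H c lam n (P n)"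
  shows "(\<lambda>n. measure_pmf.expectation (P n) (\<lambda>S. (\<Sum>i=1..n. Xc i S)\<^sup>2))
    \<sim>[sequentially] (\<lambda>n. lam * c / ((2*H - 1) * H) * real n powr (4*H - 2))"
proof (rule asymp_equivI')
  define K where "K = lam * c / ((2*H - 1) * H)"
  have "0 < K" using H c lam by (simp add: K_def)
  then have "(\<lambda>n. measure_pmf.expectation (P n) (\<lambda>S. (\<Sum>i=1..n. Xc i S)\<^sup>2) / real n powr (4*H - 2) / K)
      \<longlonglongrightarrow> K / K"
    using second_moment_sum_Xc_tendsto[OF P] by (intro tendsto_divide) (auto simp: K_def)
  then show "(\<lambda>n. measure_pmf.expectation (P n) (\<lambda>S. (\<Sum>i=1..n. Xc i S)\<^sup>2) / (K * real n powr (4*H - 2)))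
      \<longlonglongrightarrow> 1"
    using \<open>0 < K\<close> by (simp add: mult.commute)
qed

lemma lam_sq_less: "lam\<^sup>2 < lam * c / ((2*H - 1) * H)"
proof -
  have "(2*H - 1) * H < 1 * 1" using H by (intro mult_strict_mono) auto
  moreover have "0 < (2*H - 1) * H" using H by simp
  ultimately have "lam * c < lam * c / ((2*H - 1) * H)"
    using c lam by (simp add: less_divide_eq)
  moreover have "lam * lam < lam * c" using lam by simp
  ultimately show ?thesis by (simp add: power2_eq_square)
qed

lemma variance_sum_Xc_asymp:
  assumes P: "\<And>n. 1 \<le> n \<Longrightarrow> GBP2 H c lam n (P n)"
  shows "(\<lambda>n. measure_pmf.variance (P n) (\<lambda>S. \<Sum>i=1..n. Xc i S))
    \<sim>[sequentially] (\<lambda>n. real n powr (4*H - 2) * (lam * c / ((2*H - 1) * H) - lam\<^sup>2))"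
proof (rule asymp_equivI')
  define K where "K = lam * c / ((2*H - 1) * H)"
  define E2 where "E2 n = measure_pmf.expectation (P n) (\<lambda>S. (\<Sum>i=1..n. Xc i S)\<^sup>2)" for n
  have K: "0 < K - lam\<^sup>2" using lam_sq_less by (simp add: K_def)
  have "(\<lambda>n. (E2 n / real n powr (4*H - 2) - lam\<^sup>2) / (K - lam\<^sup>2)) \<longlonglongrightarrow> (K - lam\<^sup>2) / (K - lam\<^sup>2)"
    using second_moment_sum_Xc_tendsto[OF P] K by (intro tendsto_intros) (auto simp: E2_def K_def)
  moreover have "\<forall>\<^sub>F n in sequentially. (E2 n / real n powr (4*H - 2) - lam\<^sup>2) / (K - lam\<^sup>2) =
      measure_pmf.variance (P n) (\<lambda>S. \<Sum>i=1..n. Xc i S) / (real n powr (4*H - 2) * (K - lam\<^sup>2))"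
    using eventually_ge_at_top[of 1]
  proof eventually_elim
    case (elim n)
    have "(lam * real n powr (2*H - 1))\<^sup>2 = lam\<^sup>2 * real n powr (4*H - 2)"
      by (simp add: power_mult_distrib powr_add[symmetric] power2_eq_square)
    then have "measure_pmf.variance (P n) (\<lambda>S. \<Sum>i=1..n. Xc i S) = E2 n - lam\<^sup>2 * real n powr (4*H - 2)"
      using expectation_sum_Xc[OF elim P[OF elim]]
      by (subst variance_pmf_eq[OF finite_set_pmf[OF elim P[OF elim]]]) (simp add: E2_def)
    then show ?case using elim K by (simp add: field_simps)
  qed
  ultimately show "(\<lambda>n. measure_pmf.variance (P n) (\<lambda>S. \<Sum>i=1..n. Xc i S) /
      (real n powr (4*H - 2) * (K - lam\<^sup>2))) \<longlonglongrightarrow> 1"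
    using K by (simp add: Lim_transform_eventually)
qed

end

theorem theorem2p4:
  fixes H c lam :: real
  assumes H: "1/2 < H" "H < 1"
    and c: "0 < c" "c < 2 powr (2*H - 2)"
    and lam: "0 < lam" "lam < c"
  shows
    "(\<forall>n\<ge>1. \<exists>P. GBP2 H c lam n P) \<and>
     (\<forall>n\<ge>1. \<forall>P Q. GBP2 H c lam n P \<longrightarrow> GBP2 H c lam n Q \<longrightarrow> P = Q) \<and>
     (\<forall>P :: nat \<Rightarrow> nat set pmf. (\<forall>n\<ge>1. GBP2 H c lam n (P n)) \<longrightarrow>
        (\<forall>n\<ge>1. \<forall>I (m::int). I \<subseteq> {1..n} \<longrightarrow>
             (\<forall>i\<in>I. 1 \<le> int i + m \<and> int i + m \<le> int n) \<longrightarrow>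
             map_pmf (\<lambda>S. {i\<in>I. nat (int i + m) \<in> S}) (P n) = map_pmf (\<lambda>S. S \<inter> I) (P n)) \<and>
        (\<forall>n\<ge>1. \<forall>i\<in>{1..n}.
             measure_pmf.prob (P n) {S. i \<in> S} = pn H lam n \<and>
             measure_pmf.prob (P n) {S. i \<notin> S} = 1 - pn H lam n) \<and>
        (\<forall>n\<ge>1. \<forall>i\<in>{1..n}. \<forall>j\<in>{1..n}. i \<noteq> j \<longrightarrow>
             cov_pmf (P n) (Xc i) (Xc j)
               = pn H lam n * c * \<bar>real i - real j\<bar> powr (2*H - 2) - (pn H lam n)\<^sup>2) \<and>
        (\<forall>i j. 1 \<le> i \<longrightarrow> 1 \<le> j \<longrightarrow> i \<noteq> j \<longrightarrow>
             (\<lambda>n. corr_pmf (P n) (Xc i) (Xc j)) \<longlonglongrightarrow> c * \<bar>real i - real j\<bar> powr (2*H - 2)) \<and>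
        (\<forall>n\<ge>1. measure_pmf.expectation (P n) (\<lambda>S. \<Sum>i=1..n. Xc i S)
                 = lam * real n powr (2*H - 1)) \<and>
        (\<lambda>n. measure_pmf.expectation (P n) (\<lambda>S. (\<Sum>i=1..n. Xc i S)\<^sup>2))
           \<sim>[sequentially] (\<lambda>n. lam * c / ((2*H - 1) * H) * real n powr (4*H - 2)) \<and>
        (\<lambda>n. measure_pmf.variance (P n) (\<lambda>S. \<Sum>i=1..n. Xc i S))
           \<sim>[sequentially] (\<lambda>n. real n powr (4*H - 2) * (lam * c / ((2*H - 1) * H) - lam\<^sup>2)))"
proof -
  interpret gbp H c lam by unfold_locales (use assms in auto)
  show ?thesis
  proof (intro conjI allI impI ballI)
    show "\<exists>P. GBP2 H c lam n P" if "1 \<le> n" for n using that by (rule GBP2_exists)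
    show "P = Q" if "GBP2 H c lam n P" "GBP2 H c lam n Q" for n P Q using that by (rule GBP2_unique)
    fix P :: "nat \<Rightarrow> nat set pmf"
    assume "\<forall>n\<ge>1. GBP2 H c lam n (P n)"
    then have P: "\<And>n. 1 \<le> n \<Longrightarrow> GBP2 H c lam n (P n)" by blast
    show "map_pmf (\<lambda>S. {i\<in>I. nat (int i + m) \<in> S}) (P n) = map_pmf (\<lambda>S. S \<inter> I) (P n)"
      if "1 \<le> n" "I \<subseteq> {1..n}" "\<forall>i\<in>I. 1 \<le> int i + m \<and> int i + m \<le> int n" for n I m
      using GBP2_stationary[OF P that(2-3)] that(1) .
    show "measure_pmf.prob (P n) {S. i \<in> S} = pn H lam n" "measure_pmf.prob (P n) {S. i \<notin> S} = 1 - pn H lam n"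
      if "1 \<le> n" "i \<in> {1..n}" for n i
      using that prob_mem prob_not_mem P by blast+
    show "cov_pmf (P n) (Xc i) (Xc j) = pn H lam n * c * \<bar>real i - real j\<bar> powr (2*H - 2) - (pn H lam n)\<^sup>2"
      if "1 \<le> n" "i \<in> {1..n}" "j \<in> {1..n}" "i \<noteq> j" for n i j
      using that cov_Xc P by blast
    show "(\<lambda>n. corr_pmf (P n) (Xc i) (Xc j)) \<longlonglongrightarrow> c * \<bar>real i - real j\<bar> powr (2*H - 2)"
      if "1 \<le> i" "1 \<le> j" "i \<noteq> j" for i j
      using that P by (intro corr_Xc_tendsto)
    show "measure_pmf.expectation (P n) (\<lambda>S. \<Sum>i=1..n. Xc i S) = lam * real n powr (2*H - 1)"
      if "1 \<le> n" for n
      using that P by (intro expectation_sum_Xc)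
    show "(\<lambda>n. measure_pmf.expectation (P n) (\<lambda>S. (\<Sum>i=1..n. Xc i S)\<^sup>2))
        \<sim>[sequentially] (\<lambda>n. lam * c / ((2*H - 1) * H) * real n powr (4*H - 2))"
      using P by (rule second_moment_sum_Xc_asymp)
    show "(\<lambda>n. measure_pmf.variance (P n) (\<lambda>S. \<Sum>i=1..n. Xc i S))
        \<sim>[sequentially] (\<lambda>n. real n powr (4*H - 2) * (lam * c / ((2*H - 1) * H) - lam\<^sup>2))"
      using P by (rule variance_sum_Xc_asymp)
  qed
qed

end
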